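(* For every braid $\beta$ on $n$ strands with associated permutation $w$, the Rouquier complex $T_\beta$ carries an operator $u$ of homological degree $-2$ and $q$-degree $4$ such that $$[d,u]=\sum_{a=1}^n\left(x_a+x'_{w(a)}\right)\xi_a,$$ where $d$ is the differential of $T_\beta$ and $\xi_a$ are the dot-sliding homotopies on $T_\beta$.
   Context: Let $R=\mathbb{C}[x_1,\dots,x_n]$ with $\deg x_i=q^2$. Let $B_i=R\otimes_{R^{(i\,i+1)}}R$, presented as $\mathbb{C}[x_1,\dots,x_n,x'_1,\dots,x'_n]$ modulo $x_i+x_{i+1}=x'_i+x'_{i+1}$, $x_ix_{i+1}=x'_ix'_{i+1}$, $x_j=x'_j$ ($j\ne i,i+1$); unprimed variables act on the left, primed on the right. Let $b_i:B_i\to R$ send $1\mapsto1$ and $b_i^*:qR\to B_i$ send $1\mapsto x_i-x'_{i+1}$. The Rouquier complexes are $T_i=[B_i\xrightarrow{b_i}R]$ and $T_i^{-1}=[qR\xrightarrow{b_i^*}B_i]$ (differentials of homological degree $+1$), and for $\beta=\sigma_{i_1}^{\epsilon_1}\cdots\sigma_{i_r}^{\epsilon_r}$, $T_\beta=T_{i_1}^{\epsilon_1}\otimes_R\cdots\otimes_R T_{i_r}^{\epsilon_r}$, where in a tensor product the primed variables denote the rightmost set of variables. Dot-sliding homotopies: on $T_i$ set $\xi_i=b_i^*$, $\xi_{i+1}=-b_i^*$ (maps from the $R$ term to the $B_i$ term, homological degree $-1$) and $\xi_j=0$ otherwise; on $T_i^{-1}$ set $\xi_i=b_i$, $\xi_{i+1}=-b_i$,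 $\xi_j=0$ otherwise. Then $[d,\xi_a]=x_a-x'_{s_i(a)}$. For braids $\beta,\gamma$ with permutations $v,w$, on $T_{\beta\gamma}=T_\beta\otimes T_\gamma$ set $\xi_a^{\beta\gamma}=\xi_a^\beta+\xi_{v(a)}^\gamma$ (each extended by the identity on the other factor), so that $[d,\xi_a]=x_a-x'_{w v(a)}$ for the permutation of $\beta\gamma$. *)

theory Defs
  imports Complex_Main "HOL-Library.Poly_Mapping"
begin

text \<open>Variable (j,a): column j (0 = leftmost/unprimed set, length of the braid word
  = rightmost/primed set), strand a in 1..n.\<close>

type_synonym mono = "(nat \<times> nat) \<Rightarrow>\<^sub>0 nat"
type_synonym mpoly = "mono \<Rightarrow>\<^sub>0 complex"

definition Var :: "nat \<Rightarrow> nat \<Rightarrow> mpoly" where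
  "Var j a = Poly_Mapping.single (Poly_Mapping.single (j, a) 1) 1"

definition Const :: "complex \<Rightarrow> mpoly" where
  "Const c = Poly_Mapping.single 0 c"

definition mdeg :: "mono \<Rightarrow> nat" where
  "mdeg m = (\<Sum>v\<in>Poly_Mapping.keys m. Poly_Mapping.lookup m v)"

definition in_ring :: "nat \<Rightarrow> nat \<Rightarrow> mpoly \<Rightarrow> bool" where
  "in_ring r n p \<longleftrightarrow> (\<forall>m\<in>Poly_Mapping.keys p. \<forall>v\<in>Poly_Mapping.keys m. fst v \<le> r \<and> 1 \<le> snd v \<and> snd v \<le> n)"

definition ideal_gen :: "mpoly set \<Rightarrow> mpoly set" where
  "ideal_gen G = {p. \<exists>F c. finite F \<and> F \<subseteq> G \<and> p = (\<Sum>g\<in>F. c g * g)}"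

text \<open>A braid word is a list of pairs (i, e): the generator sigma_i, with
  e = True for sigma_i and e = False for sigma_i^{-1}. Position j (1-based) of the
  word is the j-th tensor factor, sitting between columns j-1 and j.
  A term of the (expanded) tensor product T_beta is given by the set S of positions
  whose factor is B_i (the other positions carry R, resp. qR).\<close>

text \<open>relations of factor j with generator i (B_i if isB, else R resp. qR)\<close>
definition fac_rels :: "nat \<Rightarrow> nat \<Rightarrow> nat \<Rightarrow> bool \<Rightarrow> mpoly set" where
  "fac_rels n j i isB =
     (if isB then
        {Var (j-1) i + Var (j-1) (i+1) - Var j i - Var j (i+1),
         Var (j-1) i * Var (j-1) (i+1) - Var j i * Var j (i+1)}
        \<union> {Var (j-1) b - Var j b | b. b \<in> {1..n} \<and> b \<noteq> i \<and> b \<noteq> i+1}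
      else {Var (j-1) b - Var j b | b. b \<in> {1..n}})"

definition term_ideal :: "nat \<Rightarrow> (nat \<times> bool) list \<Rightarrow> nat set \<Rightarrow> mpoly set" where
  "term_ideal n ws S =
     ideal_gen (\<Union>j\<in>{1..length ws}. fac_rels n j (fst (ws ! (j-1))) (j \<in> S))"

text \<open>homological degree of a term: R in T_i sits in degree 1, qR in T_i^{-1} in degree -1,
  B_i in degree 0\<close>
definition hdeg :: "(nat \<times> bool) list \<Rightarrow> nat set \<Rightarrow> int" where
  "hdeg ws S = (\<Sum>j\<in>{1..length ws} - S. if snd (ws ! (j-1)) then 1 else -1)"

text \<open>q-degree of the generator 1 of a term (deg x = 2; the generator of qR has
  q-degree 2, so that b_i^* has q-degree 0)\<close>
definition qshift :: "(nat \<times> bool) list \<Rightarrow> nat set \<Rightarrow> int" where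
  "qshift ws S = (\<Sum>j\<in>{1..length ws} - S. if snd (ws ! (j-1)) then 0 else 2)"

definition qhomog :: "(nat \<times> bool) list \<Rightarrow> nat set \<Rightarrow> int \<Rightarrow> mpoly \<Rightarrow> bool" where
  "qhomog ws S k p \<longleftrightarrow> (\<forall>m\<in>Poly_Mapping.keys p. 2 * int (mdeg m) + qshift ws S = k)"

text \<open>Koszul sign for acting on factor j: (-1)^(homological degree of factors before j)\<close>
definition ksign :: "(nat \<times> bool) list \<Rightarrow> nat set \<Rightarrow> nat \<Rightarrow> mpoly" where
  "ksign ws S j = (-1) ^ card {k \<in> {1..<j}. k \<notin> S}"

definition stran :: "nat \<Rightarrow> nat \<Rightarrow> nat" where
  "stran i a = (if a = i then i+1 else if a = i+1 then i else a)"

fun braid_perm :: "(nat \<times> bool) list \<Rightarrow> nat \<Rightarrow> nat" where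
  "braid_perm [] = id"
| "braid_perm (x # ws) = braid_perm ws \<circ> stran (fst x)"

text \<open>An operator is given by its entries  f S' S : (term S) \<rightarrow> (term S'),
  acting on polynomial representatives.\<close>
type_synonym op = "nat set \<Rightarrow> nat set \<Rightarrow> mpoly \<Rightarrow> mpoly"

definition opcomp :: "nat \<Rightarrow> op \<Rightarrow> op \<Rightarrow> op" where
  "opcomp r f g S'' S p = (\<Sum>T\<in>Pow {1..r}. f S'' T (g T S p))"

definition rdiff :: "(nat \<times> bool) list \<Rightarrow> op" where
  "rdiff ws S' S p = (\<Sum>j\<in>{1..length ws}.
      let i = fst (ws ! (j-1)); e = snd (ws ! (j-1)) in
      if e \<and> j \<in> S \<and> S' = S - {j} then ksign ws S j * p
      else if \<not> e \<and> j \<notin> S \<and> S' = insert j S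
        then ksign ws S j * (Var (j-1) i - Var j (i+1)) * p
      else 0)"

text \<open>dot-sliding homotopy xi_a on T_beta: sum over factors j of xi^{(j)}_{p(a)},
  p the permutation of the first j-1 letters, with Koszul signs\<close>
definition dot_slide :: "(nat \<times> bool) list \<Rightarrow> nat \<Rightarrow> op" where
  "dot_slide ws a S' S p = (\<Sum>j\<in>{1..length ws}.
      let i = fst (ws ! (j-1)); e = snd (ws ! (j-1));
          c = braid_perm (take (j-1) ws) a;
          coef = (if c = i then 1 else if c = i+1 then -1 else 0 :: mpoly) in
      if e \<and> j \<notin> S \<and> S' = insert j S
        then ksign ws S j * coef * (Var (j-1) i - Var j (i+1)) * p
      else if \<not> e \<and> j \<in> S \<and> S' = S - {j} then ksign ws S j * coef * p
      else 0)"

definition bimod_hom :: "nat \<Rightarrow> (nat \<times> bool) list \<Rightarrow> nat set \<Rightarrow> nat set \<Rightarrow> (mpoly \<Rightarrow> mpoly) \<Rightarrow> bool" where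
  "bimod_hom n ws S' S f \<longleftrightarrow>
     (let r = length ws; I = term_ideal n ws S'; R = {p. in_ring r n p} in
      (\<forall>p\<in>R. f p \<in> R) \<and>
      (\<forall>p\<in>R. p \<in> term_ideal n ws S \<longrightarrow> f p \<in> I) \<and>
      (\<forall>p\<in>R. \<forall>q\<in>R. f (p + q) - f p - f q \<in> I) \<and>
      (\<forall>c. \<forall>p\<in>R. f (Const c * p) - Const c * f p \<in> I) \<and>
      (\<forall>a\<in>{1..n}. \<forall>p\<in>R. f (Var 0 a * p) - Var 0 a * f p \<in> I
                        \<and> f (Var r a * p) - Var r a * f p \<in> I))"

end

theory Submission
  imports Defs
begin

(* Operators on T_beta are matrices indexed by pairs of terms (sets of positions carrying a B_i),
   acting on representatives by multiplication. The differential d and the dot-sliding homotopy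
   xi^(j)_b of the j-th factor are odd; by the Koszul signs they anticommute when they act on
   different factors, while on the same factor d xi^(j)_b + xi^(j)_b d is the scalar
   c_b (x_i - x'_(i+1)) with c_b in {1, -1, 0}. Take u = sum_a sum_(j<k) xi^(j)_(a_j) xi^(k)_(a_k),
   where a_j is the position of strand a before the j-th letter. Then
   [d, u] = sum_a sum_(j<k) ([d, xi^(j)] xi^(k) - xi^(j) [d, xi^(k)]), and modulo the relations
   [d, xi^(j)_(a_j)] = z_(j-1) - z_j, where z_j is the variable of strand a in column j.
   The double sum telescopes to sum_k (z_0 + z_r - z_(k-1) - z_k) xi^(k)_(a_k). Summed over a,
   the terms with z_(k-1) + z_k vanish modulo the relations of the k-th factor: they become
   (x_i - x_(i+1) + x'_(i+1) - x'_i) times either b_i^*, which it kills in B_i, or a map into R,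
   where x_b = x'_b. What remains is sum_a (x_a + x'_(w a)) xi_a. *)

section \<open>Ideals, supports and degrees of polynomials\<close>

interpretation ideal: module "(*) :: 'a::comm_ring_1 \<Rightarrow> 'a \<Rightarrow> 'a"
  by standard (simp_all add: algebra_simps)

(* Here scale_scale reads a * (b * x) = (a * b) * x, which loops against mult.assoc. *)
declare ideal.scale_scale [simp del]

lemma ideal_gen_eq_span: "ideal_gen G = ideal.span G"
  unfolding ideal_gen_def ideal.span_explicit by auto

lemma span_mult_generators:
  fixes c :: "'a::comm_ring_1"
  assumes gens: "\<And>g. g \<in> G \<Longrightarrow> c * g \<in> ideal.span H" and "p \<in> ideal.span G"
  shows "c * p \<in> ideal.span H"
  using \<open>p \<in> ideal.span G\<close>
proof (induction rule: ideal.span_induct_alt)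
  case base
  then show ?case by (simp add: ideal.span_zero)
next
  case (step a g y)
  have "c * (a * g + y) = a * (c * g) + c * y" by (simp add: algebra_simps)
  then show ?case using gens[OF step(1)] step(2) by (simp add: ideal.span_add ideal.span_scale)
qed

lemma in_ring_iff_keys:
  "in_ring r n p \<longleftrightarrow> (\<forall>m\<in>Poly_Mapping.keys p. Poly_Mapping.keys m \<subseteq> {v. fst v \<le> r \<and> snd v \<in> {1..n}})"
  unfolding in_ring_def by auto

lemma in_ring_add: "in_ring r n p \<Longrightarrow> in_ring r n q \<Longrightarrow> in_ring r n (p + q)"
  unfolding in_ring_iff_keys using keys_add[of p q] by (meson subsetD Un_iff)

lemma in_ring_uminus: "in_ring r n p \<Longrightarrow> in_ring r n (- p)"
  unfolding in_ring_def by simp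

lemma in_ring_diff: "in_ring r n p \<Longrightarrow> in_ring r n q \<Longrightarrow> in_ring r n (p - q)"
  using in_ring_add[of r n p "- q"] in_ring_uminus by simp

lemma in_ring_mult:
  assumes "in_ring r n p" and "in_ring r n q"
  shows "in_ring r n (p * q)"
  unfolding in_ring_iff_keys
proof
  fix m assume "m \<in> Poly_Mapping.keys (p * q)"
  then obtain a b where "m = a + b" "a \<in> Poly_Mapping.keys p" "b \<in> Poly_Mapping.keys q"
    using keys_mult[of p q] by blast
  then show "Poly_Mapping.keys m \<subseteq> {v. fst v \<le> r \<and> snd v \<in> {1..n}}"
    using assms keys_add[of a b] unfolding in_ring_iff_keys by blast
qed

lemma in_ring_0: "in_ring r n 0" and in_ring_1: "in_ring r n 1"
  unfolding in_ring_def by simp_all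

lemma in_ring_sum: "(\<And>x. x \<in> A \<Longrightarrow> in_ring r n (f x)) \<Longrightarrow> in_ring r n (sum f A)"
  by (induct A rule: infinite_finite_induct) (auto intro: in_ring_0 in_ring_add)

lemma in_ring_power: "in_ring r n p \<Longrightarrow> in_ring r n (p ^ k)"
  by (induct k) (auto intro: in_ring_1 in_ring_mult)

lemma in_ring_Var: "j \<le> r \<Longrightarrow> b \<in> {1..n} \<Longrightarrow> in_ring r n (Var j b)"
  unfolding in_ring_def Var_def by simp

definition homogeneous :: "nat \<Rightarrow> mpoly \<Rightarrow> bool" where
  "homogeneous d p \<longleftrightarrow> (\<forall>m\<in>Poly_Mapping.keys p. mdeg m = d)"

lemma mdeg_add: "mdeg (a + b) = mdeg a + mdeg b"
proof -
  let ?K = "Poly_Mapping.keys a \<union> Poly_Mapping.keys b"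
  have mdeg_on_K: "Poly_Mapping.keys m \<subseteq> ?K \<Longrightarrow> mdeg m = (\<Sum>v\<in>?K. Poly_Mapping.lookup m v)" for m
    unfolding mdeg_def by (rule sum.mono_neutral_left) (auto simp: in_keys_iff)
  have "mdeg (a + b) = (\<Sum>v\<in>?K. Poly_Mapping.lookup (a + b) v)"
    using keys_add[of a b] by (intro mdeg_on_K)
  also have "\<dots> = mdeg a + mdeg b"
    by (simp add: lookup_add sum.distrib mdeg_on_K)
  finally show ?thesis .
qed

lemma homogeneous_0: "homogeneous d 0"
  and homogeneous_1: "homogeneous 0 1"
  and homogeneous_Var: "homogeneous 1 (Var j b)"
  unfolding homogeneous_def Var_def by (simp_all add: mdeg_def)

lemma homogeneous_uminus: "homogeneous d p \<Longrightarrow> homogeneous d (- p)"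
  unfolding homogeneous_def by simp

lemma homogeneous_diff: "homogeneous d p \<Longrightarrow> homogeneous d q \<Longrightarrow> homogeneous d (p - q)"
  unfolding homogeneous_def using keys_add[of p "- q"] by auto

lemma homogeneous_mult:
  "homogeneous d p \<Longrightarrow> homogeneous e q \<Longrightarrow> homogeneous (d + e) (p * q)"
  unfolding homogeneous_def using keys_mult[of p q] by (fastforce simp: mdeg_add)

lemma homogeneous_power: "homogeneous 0 p \<Longrightarrow> homogeneous 0 (p ^ k)"
  by (induct k) (auto intro: homogeneous_1 dest: homogeneous_mult)

lemma term_ideal_eq_span:
  "term_ideal n ws S = ideal.span (\<Union>j\<in>{1..length ws}. fac_rels n j (fst (ws ! (j - 1))) (j \<in> S))"
  unfolding term_ideal_def ideal_gen_eq_span ..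

lemma term_ideal_0: "0 \<in> term_ideal n ws S"
  and term_ideal_add: "p \<in> term_ideal n ws S \<Longrightarrow> q \<in> term_ideal n ws S \<Longrightarrow> p + q \<in> term_ideal n ws S"
  and term_ideal_diff: "p \<in> term_ideal n ws S \<Longrightarrow> q \<in> term_ideal n ws S \<Longrightarrow> p - q \<in> term_ideal n ws S"
  and term_ideal_uminus: "p \<in> term_ideal n ws S \<Longrightarrow> - p \<in> term_ideal n ws S"
  and term_ideal_mult: "p \<in> term_ideal n ws S \<Longrightarrow> c * p \<in> term_ideal n ws S"
  unfolding term_ideal_eq_span
  by (simp_all add: ideal.span_zero ideal.span_add ideal.span_diff ideal.span_neg ideal.span_scale)

lemma term_ideal_sum:
  "(\<And>x. x \<in> A \<Longrightarrow> f x \<in> term_ideal n ws S) \<Longrightarrow> (\<Sum>x\<in>A. f x) \<in> term_ideal n ws S"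
  unfolding term_ideal_eq_span by (rule ideal.span_sum)

definition toggle :: "nat \<Rightarrow> nat set \<Rightarrow> nat set" where
  "toggle j S = (if j \<in> S then S - {j} else insert j S)"

lemma toggle_toggle [simp]: "toggle j (toggle j S) = S"
  unfolding toggle_def by auto

lemma toggle_commute: "toggle j (toggle k S) = toggle k (toggle j S)"
  unfolding toggle_def by auto

lemma mem_toggle_iff: "i \<in> toggle j S \<longleftrightarrow> (i = j \<longleftrightarrow> i \<notin> S)"
  unfolding toggle_def by auto

lemma toggle_in_Pow: "j \<in> A \<Longrightarrow> S \<in> Pow A \<Longrightarrow> toggle j S \<in> Pow A"
  unfolding toggle_def by auto

lemma ksign_square: "ksign ws S j * ksign ws S j = 1"
  unfolding ksign_def power_mult_distrib[symmetric] by simp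

lemma ksign_toggle_ge: "j \<le> k \<Longrightarrow> ksign ws (toggle k S) j = ksign ws S j"
  unfolding ksign_def toggle_def by (rule arg_cong[where f = "\<lambda>A. (-1) ^ card A"]) auto

lemma ksign_toggle_less:
  assumes "1 \<le> k" and "k < j"
  shows "ksign ws (toggle k S) j = - ksign ws S j"
proof -
  define A where "A T = {l \<in> {1..<j}. l \<notin> T}" for T
  have card_A: "card (A T) = Suc (card (A (insert k T)))" if "k \<notin> T" for T
  proof -
    have "A T = insert k (A (insert k T))" using that assms by (auto simp: A_def)
    moreover have "k \<notin> A (insert k T)" "finite (A (insert k T))" by (auto simp: A_def)
    ultimately show ?thesis by simp
  qed
  have sign_A: "ksign ws T j = (-1) ^ card (A T)" for T
    unfolding ksign_def A_def ..
  show ?thesis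
  proof (cases "k \<in> S")
    case True
    then have "insert k (S - {k}) = S" by auto
    with card_A[of "S - {k}"] True show ?thesis
      unfolding sign_A toggle_def by simp
  next
    case False
    with card_A[of S] show ?thesis
      unfolding sign_A toggle_def by simp
  qed
qed

lemma braid_perm_append_single: "braid_perm (xs @ [x]) = stran (fst x) \<circ> braid_perm xs"
  by (induct xs) (simp_all add: comp_assoc)

lemma braid_perm_bij:
  "\<forall>x\<in>set xs. 1 \<le> fst x \<and> fst x < n \<Longrightarrow> bij_betw (braid_perm xs) {1..n} {1..n}"
proof (induct xs)
  case Nil
  then show ?case by (simp add: bij_betw_def)
next
  case (Cons x xs)
  have "bij_betw (stran (fst x)) {1..n} {1..n}"
    using Cons.prems by (intro bij_betw_byWitness[where f' = "stran (fst x)"]) (auto simp: stran_def)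
  moreover have "bij_betw (braid_perm xs) {1..n} {1..n}" using Cons by simp
  ultimately show ?case unfolding braid_perm.simps by (rule bij_betw_trans)
qed

lemma telescoping_double_sum:
  fixes z X :: "nat \<Rightarrow> 'a::comm_ring_1"
  shows "(\<Sum>k\<in>{1..r}. \<Sum>j\<in>{1..<k}. (z (j - 1) - z j) * X k - X j * (z (k - 1) - z k))
       = (\<Sum>k\<in>{1..r}. (z 0 + z r - z (k - 1) - z k) * X k)"
proof (induction r)
  case 0
  then show ?case by simp
next
  case (Suc r)
  have telescope: "(\<Sum>j\<in>{1..<Suc m}. z (j - 1) - z j) = z 0 - z m" for m
    by (induction m) simp_all
  have "(\<Sum>j\<in>{1..<Suc r}. (z (j - 1) - z j) * X (Suc r) - X j * (z r - z (Suc r)))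
      = (\<Sum>j\<in>{1..<Suc r}. z (j - 1) - z j) * X (Suc r) - (\<Sum>j\<in>{1..<Suc r}. X j) * (z r - z (Suc r))"
    unfolding sum_distrib_right by (rule sum_subtractf)
  also have "\<dots> = (z 0 - z r) * X (Suc r) - (\<Sum>j\<in>{1..r}. X j) * (z r - z (Suc r))"
    unfolding telescope by (simp only: atLeastLessThanSuc_atLeastAtMost)
  finally have last: "(\<Sum>j\<in>{1..<Suc r}. (z (j - 1) - z j) * X (Suc r) - X j * (z r - z (Suc r)))
      = (z 0 - z r) * X (Suc r) - (\<Sum>j\<in>{1..r}. X j) * (z r - z (Suc r))" .
  have shift: "(\<Sum>k\<in>{1..r}. (z 0 + z (Suc r) - z (k - 1) - z k) * X k)
      = (\<Sum>k\<in>{1..r}. (z 0 + z r - z (k - 1) - z k) * X k) + (z (Suc r) - z r) * (\<Sum>k\<in>{1..r}. X k)"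
    unfolding sum_distrib_left sum.distrib[symmetric] by (intro sum.cong refl) (simp add: algebra_simps)
  have L: "(\<Sum>k\<in>{1..Suc r}. \<Sum>j\<in>{1..<k}. (z (j - 1) - z j) * X k - X j * (z (k - 1) - z k))
      = (\<Sum>k\<in>{1..r}. \<Sum>j\<in>{1..<k}. (z (j - 1) - z j) * X k - X j * (z (k - 1) - z k))
        + ((z 0 - z r) * X (Suc r) - (\<Sum>k\<in>{1..r}. X k) * (z r - z (Suc r)))"
    using last by simp
  have R: "(\<Sum>k\<in>{1..Suc r}. (z 0 + z (Suc r) - z (k - 1) - z k) * X k)
      = (\<Sum>k\<in>{1..r}. (z 0 + z r - z (k - 1) - z k) * X k) + (z (Suc r) - z r) * (\<Sum>k\<in>{1..r}. X k)
        + (z 0 - z r) * X (Suc r)"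
    using shift by simp
  show ?case unfolding L R Suc.IH by (simp add: algebra_simps)
qed

section \<open>Operators on the Rouquier complex as matrices\<close>

type_synonym term_matrix = "nat set \<Rightarrow> nat set \<Rightarrow> mpoly"

locale braid_word =
  fixes n :: nat and ws :: "(nat \<times> bool) list"
  assumes letters_bounded: "\<forall>x\<in>set ws. 1 \<le> fst x \<and> fst x < n"
begin

abbreviation "r \<equiv> length ws"
abbreviation "terms \<equiv> Pow {1..r}"

definition letter :: "nat \<Rightarrow> nat" where
  "letter j = fst (ws ! (j - 1))"

definition positive :: "nat \<Rightarrow> bool" where
  "positive j = snd (ws ! (j - 1))"

definition bstar :: "nat \<Rightarrow> mpoly" where
  "bstar j = Var (j - 1) (letter j) - Var j (letter j + 1)"

definition slide_coeff :: "nat \<Rightarrow> nat \<Rightarrow> mpoly" where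
  "slide_coeff j b = (if b = letter j then 1 else if b = letter j + 1 then -1 else 0)"

definition strand :: "nat \<Rightarrow> nat \<Rightarrow> nat" where
  "strand j a = braid_perm (take (j - 1) ws) a"

(* An odd operator acting on the j-th tensor factor alone: entry c1 from B_i to R (or qR),
   entry c0 in the opposite direction, with the Koszul sign of the factors to its left. *)
definition factor_mat :: "nat \<Rightarrow> mpoly \<Rightarrow> mpoly \<Rightarrow> term_matrix" where
  "factor_mat j c0 c1 S' S =
     (if S' = toggle j S then ksign ws S j * (if j \<in> S then c1 else c0) else 0)"

definition diff_mat :: "nat \<Rightarrow> term_matrix" where
  "diff_mat j = factor_mat j (if positive j then 0 else bstar j) (if positive j then 1 else 0)"

definition slide_mat :: "nat \<Rightarrow> nat \<Rightarrow> term_matrix" where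
  "slide_mat j b = factor_mat j (if positive j then slide_coeff j b * bstar j else 0)
                                (if positive j then 0 else slide_coeff j b)"

definition mat_mult :: "term_matrix \<Rightarrow> term_matrix \<Rightarrow> term_matrix" where
  "mat_mult M N S'' S = (\<Sum>T\<in>terms. M S'' T * N T S)"

definition d_mat :: term_matrix where
  "d_mat S' S = (\<Sum>j\<in>{1..r}. diff_mat j S' S)"

definition xi_mat :: "nat \<Rightarrow> term_matrix" where
  "xi_mat a S' S = (\<Sum>j\<in>{1..r}. slide_mat j (strand j a) S' S)"

definition u_mat :: term_matrix where
  "u_mat S' S = (\<Sum>a\<in>{1..n}. \<Sum>k\<in>{1..r}. \<Sum>j\<in>{1..<k}.
     mat_mult (slide_mat j (strand j a)) (slide_mat k (strand k a)) S' S)"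

lemma rdiff_eq: "rdiff ws S' S p = d_mat S' S * p"
  unfolding rdiff_def d_mat_def sum_distrib_right
  by (intro sum.cong refl)
     (auto simp: Let_def diff_mat_def factor_mat_def toggle_def letter_def positive_def bstar_def)

lemma dot_slide_eq: "dot_slide ws a S' S p = xi_mat a S' S * p"
  unfolding dot_slide_def xi_mat_def sum_distrib_right
  by (intro sum.cong refl)
     (auto simp: Let_def slide_mat_def factor_mat_def toggle_def letter_def positive_def bstar_def
        slide_coeff_def strand_def)

lemma opcomp_eq:
  "opcomp r (\<lambda>S' S p. M S' S * p) (\<lambda>S' S p. N S' S * p) S'' S p = mat_mult M N S'' S * p"
  unfolding opcomp_def mat_mult_def sum_distrib_right by (simp add: mult.assoc)

lemma mat_mult_sum_left:
  "mat_mult (\<lambda>S' S. \<Sum>x\<in>A. F x S' S) N S'' S = (\<Sum>x\<in>A. mat_mult (F x) N S'' S)"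
  unfolding mat_mult_def sum_distrib_right by (rule sum.swap)

lemma mat_mult_sum_right:
  "mat_mult M (\<lambda>S' S. \<Sum>x\<in>A. F x S' S) S'' S = (\<Sum>x\<in>A. mat_mult M (F x) S'' S)"
  unfolding mat_mult_def sum_distrib_left by (rule sum.swap)

lemma mat_mult_assoc: "mat_mult (mat_mult A B) C S'' S = mat_mult A (mat_mult B C) S'' S"
  unfolding mat_mult_def sum_distrib_left sum_distrib_right
  by (subst sum.swap) (simp add: mult.assoc)

lemma mat_mult_factor_mat_right:
  assumes "k \<in> {1..r}" and "S \<in> terms"
  shows "mat_mult M (factor_mat k d0 d1) S'' S
           = M S'' (toggle k S) * (ksign ws S k * (if k \<in> S then d1 else d0))"
proof -
  have "mat_mult M (factor_mat k d0 d1) S'' S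
      = (\<Sum>T\<in>terms. if T = toggle k S then M S'' T * (ksign ws S k * (if k \<in> S then d1 else d0)) else 0)"
    unfolding mat_mult_def factor_mat_def by (intro sum.cong) auto
  then show ?thesis using toggle_in_Pow[OF assms] by simp
qed

lemma factor_mat_square:
  assumes "j \<in> {1..r}" and "S \<in> terms"
  shows "mat_mult (factor_mat j c0 c1) (factor_mat j d0 d1) S'' S
           = (if S'' = S then (if j \<in> S then c0 * d1 else c1 * d0) else 0)"
proof -
  have sign: "ksign ws S j * x * (ksign ws S j * y) = x * y" for x y
    using ksign_square[of ws S j] by (metis mult.assoc mult.left_commute mult_1)
  show ?thesis
    unfolding mat_mult_factor_mat_right[OF assms] factor_mat_def
    by (simp add: ksign_toggle_ge mem_toggle_iff sign)
qed

lemma factor_mat_anticommute: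
  assumes "j \<in> {1..r}" and "k \<in> {1..r}" and "k < j" and "S \<in> terms"
  shows "mat_mult (factor_mat j c0 c1) (factor_mat k d0 d1) S'' S
       + mat_mult (factor_mat k d0 d1) (factor_mat j c0 c1) S'' S = 0"
proof -
  define c where "c = ksign ws S j * (if j \<in> S then c1 else c0)"
  define d where "d = ksign ws S k * (if k \<in> S then d1 else d0)"
  have "mat_mult (factor_mat j c0 c1) (factor_mat k d0 d1) S'' S
      = (if S'' = toggle j (toggle k S) then - c * d else 0)"
    using assms unfolding mat_mult_factor_mat_right[OF assms(2,4)] factor_mat_def c_def d_def
    by (simp add: ksign_toggle_less mem_toggle_iff)
  moreover have "mat_mult (factor_mat k d0 d1) (factor_mat j c0 c1) S'' S
      = (if S'' = toggle k (toggle j S) then d * c else 0)"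
    using assms unfolding mat_mult_factor_mat_right[OF assms(1,4)] factor_mat_def c_def d_def
    by (simp add: ksign_toggle_ge mem_toggle_iff)
  ultimately show ?thesis by (simp add: toggle_commute)
qed

lemma d_mat_slide_anticommutator:
  assumes k: "k \<in> {1..r}" and S: "S \<in> terms"
  shows "mat_mult d_mat (slide_mat k b) S'' S + mat_mult (slide_mat k b) d_mat S'' S
           = (if S'' = S then slide_coeff k b * bstar k else 0)"
proof -
  let ?f = "\<lambda>j. mat_mult (diff_mat j) (slide_mat k b) S'' S + mat_mult (slide_mat k b) (diff_mat j) S'' S"
  have "mat_mult d_mat (slide_mat k b) S'' S + mat_mult (slide_mat k b) d_mat S'' S
      = (\<Sum>j\<in>{1..r}. ?f j)"
    unfolding d_mat_def[abs_def] mat_mult_sum_left mat_mult_sum_right sum.distrib ..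
  also have "\<dots> = ?f k + (\<Sum>j\<in>{1..r} - {k}. ?f j)"
    using k by (simp add: sum.remove)
  also have "(\<Sum>j\<in>{1..r} - {k}. ?f j) = 0"
  proof (rule sum.neutral, rule ballI)
    fix j assume j: "j \<in> {1..r} - {k}"
    then consider "k < j" | "j < k" by fastforce
    then show "?f j = 0"
    proof cases
      case 1
      with j k S show ?thesis
        unfolding diff_mat_def slide_mat_def by (intro factor_mat_anticommute) auto
    next
      case 2
      with j k S show ?thesis
        unfolding diff_mat_def slide_mat_def by (subst add.commute) (intro factor_mat_anticommute, auto)
    qed
  qed
  also have "?f k = (if S'' = S then slide_coeff k b * bstar k else 0)"
    unfolding diff_mat_def slide_mat_def factor_mat_square[OF k S] by auto
  finally show ?thesis by simp
qed

lemma d_mat_slide_swap_left: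
  assumes j: "j \<in> {1..r}" and S'': "S'' \<in> terms"
  shows "mat_mult (mat_mult d_mat (slide_mat j b)) N S'' S
           = slide_coeff j b * bstar j * N S'' S - mat_mult (mat_mult (slide_mat j b) d_mat) N S'' S"
proof -
  have swap: "mat_mult d_mat (slide_mat j b) S'' T
      = (if S'' = T then slide_coeff j b * bstar j else 0) - mat_mult (slide_mat j b) d_mat S'' T"
    if "T \<in> terms" for T
    using d_mat_slide_anticommutator[OF j that] by (simp add: eq_diff_eq)
  have "mat_mult (mat_mult d_mat (slide_mat j b)) N S'' S
      = (\<Sum>T\<in>terms. (if S'' = T then slide_coeff j b * bstar j * N T S else 0)
                     - mat_mult (slide_mat j b) d_mat S'' T * N T S)"
    unfolding mat_mult_def[of "mat_mult d_mat (slide_mat j b)"]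
    by (intro sum.cong refl) (simp add: swap left_diff_distrib)
  then show ?thesis
    unfolding sum_subtractf mat_mult_def[of "mat_mult (slide_mat j b) d_mat"] using S'' by simp
qed

lemma d_mat_slide_swap_right:
  assumes k: "k \<in> {1..r}" and S: "S \<in> terms"
  shows "mat_mult M (mat_mult (slide_mat k c) d_mat) S'' S
           = M S'' S * (slide_coeff k c * bstar k) - mat_mult M (mat_mult d_mat (slide_mat k c)) S'' S"
proof -
  have "mat_mult (slide_mat k c) d_mat T S
      = (if T = S then slide_coeff k c * bstar k else 0) - mat_mult d_mat (slide_mat k c) T S" for T
    using d_mat_slide_anticommutator[OF k S] by (simp add: eq_diff_eq add.commute)
  then show ?thesis
    unfolding mat_mult_def[of M "mat_mult (slide_mat k c) d_mat"] mat_mult_def[of M "mat_mult d_mat (slide_mat k c)"]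
    using S by (simp add: right_diff_distrib sum_subtractf if_distrib[of "\<lambda>x. M S'' _ * x"] cong: sum.cong)
qed

lemma d_mat_commutator_slide_pair:
  assumes "j \<in> {1..r}" and "k \<in> {1..r}" and "S'' \<in> terms" and "S \<in> terms"
  shows "mat_mult d_mat (mat_mult (slide_mat j b) (slide_mat k c)) S'' S
           - mat_mult (mat_mult (slide_mat j b) (slide_mat k c)) d_mat S'' S
         = slide_coeff j b * bstar j * slide_mat k c S'' S
           - slide_mat j b S'' S * (slide_coeff k c * bstar k)"
  using d_mat_slide_swap_left[OF assms(1,3), of b "slide_mat k c" S]
    d_mat_slide_swap_right[OF assms(2,4), of "slide_mat j b" c S'']
  by (simp add: mat_mult_assoc)

lemma u_mat_commutator:
  assumes "S'' \<in> terms" and "S \<in> terms"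
  shows "mat_mult d_mat u_mat S'' S - mat_mult u_mat d_mat S'' S
    = (\<Sum>a\<in>{1..n}. \<Sum>k\<in>{1..r}. \<Sum>j\<in>{1..<k}.
         slide_coeff j (strand j a) * bstar j * slide_mat k (strand k a) S'' S
         - slide_mat j (strand j a) S'' S * (slide_coeff k (strand k a) * bstar k))"
  unfolding u_mat_def[abs_def] mat_mult_sum_left mat_mult_sum_right sum_subtractf[symmetric]
  using assms by (intro sum.cong refl d_mat_commutator_slide_pair) auto

section \<open>Relations of the tensor factors\<close>

lemma letter_bounds: "j \<in> {1..r} \<Longrightarrow> letter j \<in> {1..n} \<and> letter j + 1 \<in> {1..n}"
  using letters_bounded nth_mem[of "j - 1" ws] unfolding letter_def by fastforce

definition var_diff :: "nat \<Rightarrow> nat \<Rightarrow> mpoly" where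
  "var_diff j b = Var (j - 1) b - Var j b"

definition rel_e1 :: "nat \<Rightarrow> mpoly" where
  "rel_e1 j = Var (j - 1) (letter j) + Var (j - 1) (letter j + 1) - Var j (letter j) - Var j (letter j + 1)"

definition rel_e2 :: "nat \<Rightarrow> mpoly" where
  "rel_e2 j = Var (j - 1) (letter j) * Var (j - 1) (letter j + 1) - Var j (letter j) * Var j (letter j + 1)"

lemma fac_rels_B: "fac_rels n j (letter j) True
  = {rel_e1 j, rel_e2 j} \<union> {var_diff j b | b. b \<in> {1..n} \<and> b \<noteq> letter j \<and> b \<noteq> letter j + 1}"
  unfolding fac_rels_def rel_e1_def rel_e2_def var_diff_def by simp

lemma fac_rels_R: "fac_rels n j (letter j) False = {var_diff j b | b. b \<in> {1..n}}"
  unfolding fac_rels_def var_diff_def by simp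

lemma fac_rels_in_term_ideal:
  "j \<in> {1..r} \<Longrightarrow> g \<in> fac_rels n j (letter j) (j \<in> S) \<Longrightarrow> g \<in> term_ideal n ws S"
  unfolding term_ideal_eq_span letter_def by (rule ideal.span_base) blast

lemma var_diff_in_term_ideal_R:
  "j \<in> {1..r} \<Longrightarrow> j \<notin> S \<Longrightarrow> b \<in> {1..n} \<Longrightarrow> var_diff j b \<in> term_ideal n ws S"
  by (rule fac_rels_in_term_ideal) (auto simp: fac_rels_R)

lemma var_diff_in_term_ideal:
  assumes "j \<in> {1..r}" and "b \<in> {1..n}" and "b \<noteq> letter j" and "b \<noteq> letter j + 1"
  shows "var_diff j b \<in> term_ideal n ws S"
proof (cases "j \<in> S")
  case True
  with assms show ?thesis by (intro fac_rels_in_term_ideal) (auto simp: fac_rels_B)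
next
  case False
  with assms show ?thesis by (intro var_diff_in_term_ideal_R)
qed

lemma rel_e1_in_term_ideal:
  assumes j: "j \<in> {1..r}"
  shows "rel_e1 j \<in> term_ideal n ws S"
proof (cases "j \<in> S")
  case True
  with j show ?thesis by (intro fac_rels_in_term_ideal) (auto simp: fac_rels_B)
next
  case False
  have "rel_e1 j = var_diff j (letter j) + var_diff j (letter j + 1)"
    unfolding rel_e1_def var_diff_def by simp
  moreover have "var_diff j (letter j) \<in> term_ideal n ws S" "var_diff j (letter j + 1) \<in> term_ideal n ws S"
    using var_diff_in_term_ideal_R[OF j False] letter_bounds[OF j] by auto
  ultimately show ?thesis by (simp add: term_ideal_add)
qed

lemma rel_e2_in_term_ideal:
  assumes j: "j \<in> {1..r}"
  shows "rel_e2 j \<in> term_ideal n ws S"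
proof (cases "j \<in> S")
  case True
  with j show ?thesis by (intro fac_rels_in_term_ideal) (auto simp: fac_rels_B)
next
  case False
  have "rel_e2 j = Var (j - 1) (letter j + 1) * var_diff j (letter j) + Var j (letter j) * var_diff j (letter j + 1)"
    unfolding rel_e2_def var_diff_def by (simp add: algebra_simps)
  moreover have "var_diff j (letter j) \<in> term_ideal n ws S" "var_diff j (letter j + 1) \<in> term_ideal n ws S"
    using var_diff_in_term_ideal_R[OF j False] letter_bounds[OF j] by auto
  ultimately show ?thesis by (simp add: term_ideal_add term_ideal_mult)
qed

lemma bstar_var_diff_in_term_ideal:
  assumes j: "j \<in> {1..r}" and b: "b \<in> {1..n}"
  shows "bstar j * var_diff j b \<in> term_ideal n ws S"
proof -
  consider "b = letter j" | "b = letter j + 1" | "b \<noteq> letter j" "b \<noteq> letter j + 1" by blast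
  then show ?thesis
  proof cases
    case 1
    then have "bstar j * var_diff j b = Var (j - 1) (letter j) * rel_e1 j - rel_e2 j"
      unfolding bstar_def var_diff_def rel_e1_def rel_e2_def by (simp add: algebra_simps)
    then show ?thesis
      using rel_e1_in_term_ideal[OF j] rel_e2_in_term_ideal[OF j] by (simp add: term_ideal_diff term_ideal_mult)
  next
    case 2
    then have "bstar j * var_diff j b = rel_e2 j - Var j (letter j + 1) * rel_e1 j"
      unfolding bstar_def var_diff_def rel_e1_def rel_e2_def by (simp add: algebra_simps)
    then show ?thesis
      using rel_e1_in_term_ideal[OF j] rel_e2_in_term_ideal[OF j] by (simp add: term_ideal_diff term_ideal_mult)
  next
    case 3
    then show ?thesis using var_diff_in_term_ideal[OF j b] by (simp add: term_ideal_mult)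
  qed
qed

lemma slide_coeff_bstar_congruent:
  assumes j: "j \<in> {1..r}" and b: "b \<in> {1..n}"
  shows "slide_coeff j b * bstar j - (Var (j - 1) b - Var j (stran (letter j) b)) \<in> term_ideal n ws S"
proof -
  consider "b = letter j" | "b = letter j + 1" | "b \<noteq> letter j" "b \<noteq> letter j + 1" by blast
  then show ?thesis
  proof cases
    case 1
    then show ?thesis by (simp add: slide_coeff_def bstar_def stran_def term_ideal_0)
  next
    case 2
    then have "slide_coeff j b * bstar j - (Var (j - 1) b - Var j (stran (letter j) b)) = - rel_e1 j"
      unfolding slide_coeff_def bstar_def stran_def rel_e1_def by (simp add: algebra_simps)
    then show ?thesis using rel_e1_in_term_ideal[OF j] by (simp add: term_ideal_uminus)
  next
    case 3
    then have "slide_coeff j b * bstar j - (Var (j - 1) b - Var j (stran (letter j) b)) = - var_diff j b"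
      unfolding slide_coeff_def stran_def var_diff_def by simp
    then show ?thesis using var_diff_in_term_ideal[OF j b 3] by (simp add: term_ideal_uminus)
  qed
qed

lemma term_ideal_mult_transfer:
  assumes "\<And>l g. l \<in> {1..r} \<Longrightarrow> g \<in> fac_rels n l (letter l) (l \<in> T) \<Longrightarrow> c * g \<in> term_ideal n ws S"
    and "p \<in> term_ideal n ws T"
  shows "c * p \<in> term_ideal n ws S"
proof -
  have "c * g \<in> term_ideal n ws S"
    if "g \<in> (\<Union>l\<in>{1..r}. fac_rels n l (fst (ws ! (l - 1))) (l \<in> T))" for g
    using that assms(1) unfolding letter_def by blast
  then show ?thesis using assms(2) unfolding term_ideal_eq_span by (rule span_mult_generators)
qed

lemma term_ideal_remove:
  assumes j: "j \<in> {1..r}" and p: "p \<in> term_ideal n ws T"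
  shows "p \<in> term_ideal n ws (T - {j})"
proof -
  have "1 * g \<in> term_ideal n ws (T - {j})"
    if l: "l \<in> {1..r}" and g: "g \<in> fac_rels n l (letter l) (l \<in> T)" for l g
  proof (cases "l = j \<and> j \<in> T")
    case True
    with g have "g \<in> {rel_e1 j, rel_e2 j} \<union> {var_diff j b | b. b \<in> {1..n} \<and> b \<noteq> letter j \<and> b \<noteq> letter j + 1}"
      by (simp add: fac_rels_B)
    then show ?thesis
      using rel_e1_in_term_ideal[OF j] rel_e2_in_term_ideal[OF j] var_diff_in_term_ideal[OF j] by auto
  next
    case False
    then have "(l \<in> T - {j}) = (l \<in> T)" by auto
    with g have "g \<in> fac_rels n l (letter l) (l \<in> T - {j})" by (simp only:)
    then show ?thesis using fac_rels_in_term_ideal[OF l] by simp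
  qed
  from term_ideal_mult_transfer[OF this p] show ?thesis by simp
qed

lemma bstar_mult_term_ideal_insert:
  assumes j: "j \<in> {1..r}" and p: "p \<in> term_ideal n ws T"
  shows "bstar j * p \<in> term_ideal n ws (insert j T)"
proof (rule term_ideal_mult_transfer[OF _ p])
  fix l g assume l: "l \<in> {1..r}" and g: "g \<in> fac_rels n l (letter l) (l \<in> T)"
  show "bstar j * g \<in> term_ideal n ws (insert j T)"
  proof (cases "l = j \<and> j \<notin> T")
    case True
    with g obtain b where "g = var_diff j b" "b \<in> {1..n}" by (auto simp: fac_rels_R)
    then show ?thesis using bstar_var_diff_in_term_ideal[OF j] by simp
  next
    case False
    then have "(l \<in> insert j T) = (l \<in> T)" by auto
    with g have "g \<in> fac_rels n l (letter l) (l \<in> insert j T)" by (simp only:)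
    then show ?thesis using fac_rels_in_term_ideal[OF l] by (simp add: term_ideal_mult)
  qed
qed

section \<open>Bimodule maps and degrees\<close>

lemma u_mat_closure:
  assumes slide: "\<And>j b. j \<in> {1..r} \<Longrightarrow> P (slide_mat j b)"
    and mult: "\<And>M N. P M \<Longrightarrow> P N \<Longrightarrow> Q (mat_mult M N)"
    and sum: "\<And>(A :: nat set) F. (\<And>x. x \<in> A \<Longrightarrow> Q (F x)) \<Longrightarrow> Q (\<lambda>S' S. \<Sum>x\<in>A. F x S' S)"
  shows "Q u_mat"
  unfolding u_mat_def[abs_def] by (intro sum mult slide) auto

definition respects_term_ideals :: "term_matrix \<Rightarrow> bool" where
  "respects_term_ideals M \<longleftrightarrow>
     (\<forall>S' S p. p \<in> term_ideal n ws S \<longrightarrow> M S' S * p \<in> term_ideal n ws S')"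

lemma slide_mat_respects_term_ideals:
  assumes j: "j \<in> {1..r}"
  shows "respects_term_ideals (slide_mat j b)"
  unfolding respects_term_ideals_def
proof (intro allI impI)
  fix S' S p assume p: "p \<in> term_ideal n ws S"
  show "slide_mat j b S' S * p \<in> term_ideal n ws S'"
  proof (cases "S' = toggle j S")
    case False
    then show ?thesis by (simp add: slide_mat_def factor_mat_def term_ideal_0)
  next
    case S': True
    show ?thesis
    proof (cases "j \<in> S")
      case True
      with S' have "p \<in> term_ideal n ws S'" using term_ideal_remove[OF j p] by (simp add: toggle_def)
      then show ?thesis by (rule term_ideal_mult)
    next
      case False
      with S' have "bstar j * p \<in> term_ideal n ws S'"
        using bstar_mult_term_ideal_insert[OF j p] by (simp add: toggle_def)
      moreover have "slide_mat j b S' S * p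
          = ksign ws S j * (if positive j then slide_coeff j b else 0) * (bstar j * p)"
        using S' False by (simp add: slide_mat_def factor_mat_def)
      ultimately show ?thesis by (simp add: term_ideal_mult)
    qed
  qed
qed

lemma mat_mult_respects_term_ideals:
  "respects_term_ideals M \<Longrightarrow> respects_term_ideals N \<Longrightarrow> respects_term_ideals (mat_mult M N)"
  unfolding respects_term_ideals_def mat_mult_def sum_distrib_right mult.assoc
  by (blast intro: term_ideal_sum)

lemma sum_respects_term_ideals:
  "(\<And>x. x \<in> A \<Longrightarrow> respects_term_ideals (F x)) \<Longrightarrow> respects_term_ideals (\<lambda>S' S. \<Sum>x\<in>A. F x S' S)"
  unfolding respects_term_ideals_def sum_distrib_right by (blast intro: term_ideal_sum)

definition entries_in_ring :: "term_matrix \<Rightarrow> bool" where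
  "entries_in_ring M \<longleftrightarrow> (\<forall>S' S. in_ring r n (M S' S))"

lemma slide_mat_entries_in_ring:
  assumes "j \<in> {1..r}"
  shows "entries_in_ring (slide_mat j b)"
proof -
  have "in_ring r n (ksign ws S j)" for S
    unfolding ksign_def by (intro in_ring_power in_ring_uminus in_ring_1)
  moreover have "in_ring r n (slide_coeff j b)"
    unfolding slide_coeff_def by (simp add: in_ring_0 in_ring_1 in_ring_uminus)
  moreover have "in_ring r n (bstar j)"
    unfolding bstar_def using assms letter_bounds[OF assms] by (intro in_ring_diff in_ring_Var) auto
  ultimately show ?thesis
    unfolding entries_in_ring_def slide_mat_def factor_mat_def by (simp add: in_ring_0 in_ring_mult)
qed

lemma mat_mult_entries_in_ring:
  "entries_in_ring M \<Longrightarrow> entries_in_ring N \<Longrightarrow> entries_in_ring (mat_mult M N)"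
  unfolding entries_in_ring_def mat_mult_def by (simp add: in_ring_sum in_ring_mult)

lemma sum_entries_in_ring:
  "(\<And>x. x \<in> A \<Longrightarrow> entries_in_ring (F x)) \<Longrightarrow> entries_in_ring (\<lambda>S' S. \<Sum>x\<in>A. F x S' S)"
  unfolding entries_in_ring_def by (simp add: in_ring_sum)

definition shifts_hdeg :: "term_matrix \<Rightarrow> int \<Rightarrow> bool" where
  "shifts_hdeg M d \<longleftrightarrow> (\<forall>S' S. M S' S \<noteq> 0 \<longrightarrow> hdeg ws S' = hdeg ws S + d)"

definition shifts_qdeg :: "term_matrix \<Rightarrow> int \<Rightarrow> bool" where
  "shifts_qdeg M d \<longleftrightarrow>
     (\<forall>S' S. \<forall>m\<in>Poly_Mapping.keys (M S' S). 2 * int (mdeg m) + qshift ws S' = qshift ws S + d)"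

lemma hdeg_insert:
  assumes "j \<in> {1..r}" and "j \<notin> S"
  shows "hdeg ws S = hdeg ws (insert j S) + (if positive j then 1 else -1)"
proof -
  have split: "{1..r} - S = insert j ({1..r} - insert j S)" using assms by auto
  have "j \<notin> {1..r} - insert j S" by simp
  then show ?thesis
    unfolding hdeg_def split positive_def sum.insert[OF finite_Diff[OF finite_atLeastAtMost]] by simp
qed

lemma qshift_insert:
  assumes "j \<in> {1..r}" and "j \<notin> S"
  shows "qshift ws S = qshift ws (insert j S) + (if positive j then 0 else 2)"
proof -
  have split: "{1..r} - S = insert j ({1..r} - insert j S)" using assms by auto
  have "j \<notin> {1..r} - insert j S" by simp
  then show ?thesis
    unfolding qshift_def split positive_def sum.insert[OF finite_Diff[OF finite_atLeastAtMost]] by simp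
qed

lemma slide_mat_nonzero:
  "slide_mat j b S' S \<noteq> 0 \<Longrightarrow> S' = toggle j S \<and> (positive j \<longleftrightarrow> j \<notin> S)"
  unfolding slide_mat_def factor_mat_def by (auto split: if_splits)

lemma slide_mat_homogeneous: "homogeneous (if positive j then 1 else 0) (slide_mat j b S' S)"
proof -
  have ksign: "homogeneous 0 (ksign ws S j)"
    unfolding ksign_def by (intro homogeneous_power homogeneous_uminus homogeneous_1)
  have coeff: "homogeneous 0 (slide_coeff j b)"
    unfolding slide_coeff_def by (simp add: homogeneous_0 homogeneous_1 homogeneous_uminus)
  have bstar: "homogeneous 1 (bstar j)"
    unfolding bstar_def by (intro homogeneous_diff homogeneous_Var)
  show ?thesis
    unfolding slide_mat_def factor_mat_def
    using homogeneous_mult[OF ksign homogeneous_mult[OF coeff bstar]] homogeneous_mult[OF ksign coeff]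
    by (simp add: homogeneous_0)
qed

lemma slide_mat_shifts_hdeg:
  assumes j: "j \<in> {1..r}"
  shows "shifts_hdeg (slide_mat j b) (-1)"
  unfolding shifts_hdeg_def
proof (intro allI impI)
  fix S' S assume "slide_mat j b S' S \<noteq> 0"
  from slide_mat_nonzero[OF this] have S': "S' = toggle j S" and pos: "positive j \<longleftrightarrow> j \<notin> S"
    by blast+
  show "hdeg ws S' = hdeg ws S + -1"
  proof (cases "j \<in> S")
    case True
    then have "insert j (S - {j}) = S" by auto
    with True S' pos hdeg_insert[OF j, of "S - {j}"] show ?thesis by (simp add: toggle_def)
  next
    case False
    with S' pos hdeg_insert[OF j, of S] show ?thesis by (simp add: toggle_def)
  qed
qed

lemma slide_mat_shifts_qdeg:
  assumes j: "j \<in> {1..r}"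
  shows "shifts_qdeg (slide_mat j b) 2"
  unfolding shifts_qdeg_def
proof (intro allI ballI)
  fix S' S m assume m: "m \<in> Poly_Mapping.keys (slide_mat j b S' S)"
  then have "slide_mat j b S' S \<noteq> 0" by auto
  from slide_mat_nonzero[OF this] have S': "S' = toggle j S" and pos: "positive j \<longleftrightarrow> j \<notin> S"
    by blast+
  have deg: "mdeg m = (if positive j then 1 else 0)"
    using slide_mat_homogeneous m unfolding homogeneous_def by blast
  show "2 * int (mdeg m) + qshift ws S' = qshift ws S + 2"
  proof (cases "j \<in> S")
    case True
    then have "insert j (S - {j}) = S" by auto
    with True S' pos deg qshift_insert[OF j, of "S - {j}"] show ?thesis by (simp add: toggle_def)
  next
    case False
    with S' pos deg qshift_insert[OF j, of S] show ?thesis by (simp add: toggle_def)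
  qed
qed

lemma mat_mult_shifts_hdeg:
  assumes "shifts_hdeg M d" and "shifts_hdeg N e"
  shows "shifts_hdeg (mat_mult M N) (d + e)"
  unfolding shifts_hdeg_def
proof (intro allI impI)
  fix S'' S assume "mat_mult M N S'' S \<noteq> 0"
  then obtain T where "M S'' T * N T S \<noteq> 0"
    unfolding mat_mult_def by (meson sum.not_neutral_contains_not_neutral)
  then have "M S'' T \<noteq> 0" and "N T S \<noteq> 0" by auto
  then have "hdeg ws S'' = hdeg ws T + d" and "hdeg ws T = hdeg ws S + e"
    using assms unfolding shifts_hdeg_def by blast+
  then show "hdeg ws S'' = hdeg ws S + (d + e)" by simp
qed

lemma sum_shifts_hdeg:
  assumes "\<And>x. x \<in> A \<Longrightarrow> shifts_hdeg (F x) d"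
  shows "shifts_hdeg (\<lambda>S' S. \<Sum>x\<in>A. F x S' S) d"
  unfolding shifts_hdeg_def
proof (intro allI impI)
  fix S' S assume "(\<Sum>x\<in>A. F x S' S) \<noteq> 0"
  then obtain x where "x \<in> A" "F x S' S \<noteq> 0" by (meson sum.not_neutral_contains_not_neutral)
  with assms show "hdeg ws S' = hdeg ws S + d" unfolding shifts_hdeg_def by blast
qed

lemma mat_mult_shifts_qdeg:
  assumes "shifts_qdeg M d" and "shifts_qdeg N e"
  shows "shifts_qdeg (mat_mult M N) (d + e)"
  unfolding shifts_qdeg_def
proof (intro allI ballI)
  fix S'' S m assume "m \<in> Poly_Mapping.keys (mat_mult M N S'' S)"
  then have "m \<in> (\<Union>T\<in>terms. Poly_Mapping.keys (M S'' T * N T S))"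
    unfolding mat_mult_def using keys_sum[of "\<lambda>T. M S'' T * N T S" terms] by blast
  then obtain T where "m \<in> Poly_Mapping.keys (M S'' T * N T S)" by blast
  then obtain a b where m: "m = a + b"
    and a: "a \<in> Poly_Mapping.keys (M S'' T)" and b: "b \<in> Poly_Mapping.keys (N T S)"
    using keys_mult[of "M S'' T" "N T S"] by blast
  have "2 * int (mdeg a) + qshift ws S'' = qshift ws T + d"
    using assms(1) a unfolding shifts_qdeg_def by blast
  moreover have "2 * int (mdeg b) + qshift ws T = qshift ws S + e"
    using assms(2) b unfolding shifts_qdeg_def by blast
  ultimately show "2 * int (mdeg m) + qshift ws S'' = qshift ws S + (d + e)"
    unfolding m mdeg_add by simp
qed

lemma sum_shifts_qdeg:
  assumes "\<And>x. x \<in> A \<Longrightarrow> shifts_qdeg (F x) d"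
  shows "shifts_qdeg (\<lambda>S' S. \<Sum>x\<in>A. F x S' S) d"
  unfolding shifts_qdeg_def
proof (intro allI ballI)
  fix S' S m assume "m \<in> Poly_Mapping.keys (\<Sum>x\<in>A. F x S' S)"
  then obtain x where "x \<in> A" "m \<in> Poly_Mapping.keys (F x S' S)"
    using keys_sum[of "\<lambda>x. F x S' S" A] by blast
  with assms show "2 * int (mdeg m) + qshift ws S' = qshift ws S + d" unfolding shifts_qdeg_def by blast
qed

lemma u_mat_respects_term_ideals: "respects_term_ideals u_mat"
  by (rule u_mat_closure[where P = respects_term_ideals])
     (simp_all add: slide_mat_respects_term_ideals mat_mult_respects_term_ideals sum_respects_term_ideals)

lemma u_mat_entries_in_ring: "entries_in_ring u_mat"
  by (rule u_mat_closure[where P = entries_in_ring])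
     (simp_all add: slide_mat_entries_in_ring mat_mult_entries_in_ring sum_entries_in_ring)

lemma u_mat_shifts_hdeg: "shifts_hdeg u_mat (-2)"
  by (rule u_mat_closure[where P = "\<lambda>M. shifts_hdeg M (-1)"])
     (simp_all add: slide_mat_shifts_hdeg sum_shifts_hdeg mat_mult_shifts_hdeg[where d = "-1" and e = "-1", simplified])

lemma u_mat_shifts_qdeg: "shifts_qdeg u_mat 4"
  by (rule u_mat_closure[where P = "\<lambda>M. shifts_qdeg M 2"])
     (simp_all add: slide_mat_shifts_qdeg sum_shifts_qdeg mat_mult_shifts_qdeg[where d = 2 and e = 2, simplified])

section \<open>The commutator of d and u\<close>

lemma strand_bij: "bij_betw (strand k) {1..n} {1..n}"
  unfolding strand_def using letters_bounded by (intro braid_perm_bij) (meson in_set_takeD)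

lemma strand_in: "a \<in> {1..n} \<Longrightarrow> strand k a \<in> {1..n}"
  using strand_bij bij_betwE by blast

lemma strand_Suc:
  assumes "j \<in> {1..r}"
  shows "strand (Suc j) a = stran (letter j) (strand j a)"
proof -
  have "take j ws = take (j - 1) ws @ [ws ! (j - 1)]"
    using assms take_Suc_conv_app_nth[of "j - 1" ws] by (cases j) auto
  then show ?thesis unfolding strand_def letter_def by (simp add: braid_perm_append_single)
qed

lemma slide_mat_coeff: "slide_mat k b S' S = slide_coeff k b * slide_mat k (letter k) S' S"
  unfolding slide_mat_def factor_mat_def slide_coeff_def by (simp add: mult.left_commute)

lemma slide_mat_cases: "k \<notin> S' \<or> (\<exists>c. slide_mat k b S' S = c * bstar k)"
proof (cases "S' = toggle k S \<and> k \<in> S")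
  case True
  then show ?thesis by (simp add: toggle_def)
next
  case False
  then have "slide_mat k b S' S
      = (if S' = toggle k S \<and> positive k then ksign ws S k * slide_coeff k b else 0) * bstar k"
    unfolding slide_mat_def factor_mat_def by auto
  then show ?thesis by blast
qed

definition col_var :: "nat \<Rightarrow> nat \<Rightarrow> mpoly" where
  "col_var a j = Var j (strand (Suc j) a)"

lemma col_var_0: "col_var a 0 = Var 0 a"
  and col_var_last: "col_var a r = Var r (braid_perm ws a)"
  unfolding col_var_def strand_def by simp_all

lemma col_var_prev: "j \<in> {1..r} \<Longrightarrow> col_var a (j - 1) = Var (j - 1) (strand j a)"
  unfolding col_var_def by (simp add: Suc_diff_1)

lemma slide_commutator_col_var_congruent:
  assumes "j \<in> {1..r}" and "a \<in> {1..n}"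
  shows "slide_coeff j (strand j a) * bstar j - (col_var a (j - 1) - col_var a j) \<in> term_ideal n ws S"
  using slide_coeff_bstar_congruent[OF assms(1) strand_in[OF assms(2)]]
  unfolding col_var_prev[OF assms(1)] unfolding col_var_def strand_Suc[OF assms(1)] .

lemma factor_slide_sum_eq:
  assumes k: "k \<in> {1..r}"
  shows "(\<Sum>a\<in>{1..n}. (col_var a (k - 1) + col_var a k) * slide_mat k (strand k a) S' S)
       = (Var (k - 1) (letter k) - Var (k - 1) (letter k + 1) + Var k (letter k + 1) - Var k (letter k))
         * slide_mat k (letter k) S' S"
proof -
  define i where "i = letter k"
  define F where "F b = Var (k - 1) b + Var k (stran i b)" for b
  have i: "i \<in> {1..n}" "i + 1 \<in> {1..n}" using letter_bounds[OF k] unfolding i_def by auto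
  have "(\<Sum>a\<in>{1..n}. (col_var a (k - 1) + col_var a k) * slide_mat k (strand k a) S' S)
      = (\<Sum>b\<in>{1..n}. F b * slide_mat k b S' S)"
    unfolding col_var_prev[OF k] unfolding col_var_def F_def i_def strand_Suc[OF k]
    by (rule sum.reindex_bij_betw[OF strand_bij])
  also have "\<dots> = (\<Sum>b\<in>{1..n}. F b * slide_coeff k b) * slide_mat k i S' S"
  proof -
    have "F b * slide_mat k b S' S = F b * slide_coeff k b * slide_mat k i S' S" for b
      unfolding i_def slide_mat_coeff[of k b S' S] by (rule mult.assoc[symmetric])
    then show ?thesis by (simp add: sum_distrib_right)
  qed
  also have "(\<Sum>b\<in>{1..n}. F b * slide_coeff k b) = F i - F (i + 1)"
  proof -
    have "F b * slide_coeff k b = (if b = i then F i else 0) - (if b = i + 1 then F (i + 1) else 0)" for b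
      unfolding slide_coeff_def i_def by simp
    then show ?thesis using i by (simp add: sum_subtractf)
  qed
  finally show ?thesis unfolding F_def i_def stran_def by (simp add: algebra_simps)
qed

lemma factor_slide_sum_in_term_ideal:
  assumes k: "k \<in> {1..r}"
  shows "(\<Sum>a\<in>{1..n}. (col_var a (k - 1) + col_var a k) * slide_mat k (strand k a) S' S)
           \<in> term_ideal n ws S'"
proof -
  define i where "i = letter k"
  define e where "e = Var (k - 1) i - Var (k - 1) (i + 1) + Var k (i + 1) - Var k i"
  have "e * bstar k = rel_e1 k * (bstar k + 2 * Var k (i + 1)) - 2 * rel_e2 k"
    unfolding e_def bstar_def rel_e1_def rel_e2_def i_def by (simp add: algebra_simps)
  then have B: "e * bstar k \<in> term_ideal n ws S'"
    using rel_e1_in_term_ideal[OF k] rel_e2_in_term_ideal[OF k]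
    by (simp add: term_ideal_diff term_ideal_mult mult.commute[of "rel_e1 k"])
  have "e = var_diff k i - var_diff k (i + 1)"
    unfolding e_def var_diff_def by simp
  then have R: "e \<in> term_ideal n ws S'" if "k \<notin> S'"
    using var_diff_in_term_ideal_R[OF k that] letter_bounds[OF k] unfolding i_def by (simp add: term_ideal_diff)
  from slide_mat_cases[of k S' i S] have "e * slide_mat k i S' S \<in> term_ideal n ws S'"
  proof
    assume "k \<notin> S'"
    from term_ideal_mult[OF R[OF this], of "slide_mat k i S' S"] show ?thesis by (simp add: mult.commute)
  next
    assume "\<exists>c. slide_mat k i S' S = c * bstar k"
    then obtain c where "slide_mat k i S' S = c * bstar k" ..
    with term_ideal_mult[OF B, of c] show ?thesis by (simp add: mult.left_commute)
  qed
  then show ?thesis unfolding factor_slide_sum_eq[OF k] e_def i_def .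
qed

definition telescope_mat :: term_matrix where
  "telescope_mat S' S = (\<Sum>a\<in>{1..n}. \<Sum>k\<in>{1..r}. \<Sum>j\<in>{1..<k}.
      (col_var a (j - 1) - col_var a j) * slide_mat k (strand k a) S' S
      - slide_mat j (strand j a) S' S * (col_var a (k - 1) - col_var a k))"

lemma u_mat_commutator_congruent:
  assumes "S' \<in> terms" and "S \<in> terms"
  shows "mat_mult d_mat u_mat S' S - mat_mult u_mat d_mat S' S - telescope_mat S' S \<in> term_ideal n ws S'"
  unfolding u_mat_commutator[OF assms] telescope_mat_def sum_subtractf[symmetric]
proof (intro term_ideal_sum)
  fix a k j assume a: "a \<in> {1..n}" and k: "k \<in> {1..r}" and j: "j \<in> {1..<k}"
  let ?X = "\<lambda>k. slide_mat k (strand k a) S' S"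
  let ?c = "\<lambda>j. slide_coeff j (strand j a) * bstar j"
  let ?z = "\<lambda>j. col_var a (j - 1) - col_var a j"
  have "?c j * ?X k - ?X j * ?c k - (?z j * ?X k - ?X j * ?z k) = ?X k * (?c j - ?z j) - ?X j * (?c k - ?z k)"
    by (simp add: algebra_simps)
  moreover have "?c j - ?z j \<in> term_ideal n ws S'" "?c k - ?z k \<in> term_ideal n ws S'"
    using j k by (intro slide_commutator_col_var_congruent a; auto)+
  ultimately show "?c j * ?X k - ?X j * ?c k - (?z j * ?X k - ?X j * ?z k) \<in> term_ideal n ws S'"
    by (simp add: term_ideal_diff term_ideal_mult)
qed

lemma telescope_mat_congruent:
  "telescope_mat S' S - (\<Sum>a\<in>{1..n}. (Var 0 a + Var r (braid_perm ws a)) * xi_mat a S' S)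
     \<in> term_ideal n ws S'"
proof -
  let ?X = "\<lambda>k a. slide_mat k (strand k a) S' S"
  have "telescope_mat S' S
      = (\<Sum>a\<in>{1..n}. \<Sum>k\<in>{1..r}. (col_var a 0 + col_var a r - col_var a (k - 1) - col_var a k) * ?X k a)"
    unfolding telescope_mat_def by (rule sum.cong[OF refl]) (rule telescoping_double_sum)
  then have "telescope_mat S' S - (\<Sum>a\<in>{1..n}. (Var 0 a + Var r (braid_perm ws a)) * xi_mat a S' S)
      = - (\<Sum>a\<in>{1..n}. \<Sum>k\<in>{1..r}. (col_var a (k - 1) + col_var a k) * ?X k a)"
    unfolding xi_mat_def col_var_0[symmetric] col_var_last[symmetric]
    by (simp add: sum_distrib_left sum_subtractf[symmetric] sum_negf[symmetric] algebra_simps)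
  also have "\<dots> = - (\<Sum>k\<in>{1..r}. \<Sum>a\<in>{1..n}. (col_var a (k - 1) + col_var a k) * ?X k a)"
    by (subst sum.swap) (rule refl)
  also have "\<dots> \<in> term_ideal n ws S'"
    by (rule term_ideal_uminus, rule term_ideal_sum) (rule factor_slide_sum_in_term_ideal)
  finally show ?thesis .
qed

lemma commutator_congruent:
  assumes "S' \<in> terms" and "S \<in> terms"
  shows "mat_mult d_mat u_mat S' S - mat_mult u_mat d_mat S' S
           - (\<Sum>a\<in>{1..n}. (Var 0 a + Var r (braid_perm ws a)) * xi_mat a S' S) \<in> term_ideal n ws S'"
  using term_ideal_add[OF u_mat_commutator_congruent[OF assms] telescope_mat_congruent[of S' S]] by (simp add: algebra_simps)

lemma bimod_hom_mult_entry:
  assumes "entries_in_ring M" and "respects_term_ideals M"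
  shows "bimod_hom n ws S' S (\<lambda>p. M S' S * p)"
  using assms unfolding bimod_hom_def Let_def entries_in_ring_def respects_term_ideals_def
  by (simp add: in_ring_mult term_ideal_0 algebra_simps)

lemma qhomog_mult_entry:
  assumes "shifts_qdeg M d" and "qhomog ws S k p"
  shows "qhomog ws S' (k + d) (M S' S * p)"
  unfolding qhomog_def
proof
  fix m assume "m \<in> Poly_Mapping.keys (M S' S * p)"
  then obtain a b where m: "m = a + b"
    and a: "a \<in> Poly_Mapping.keys (M S' S)" and b: "b \<in> Poly_Mapping.keys p"
    using keys_mult[of "M S' S" p] by blast
  have "2 * int (mdeg a) + qshift ws S' = qshift ws S + d" using assms(1) a unfolding shifts_qdeg_def by blast
  moreover have "2 * int (mdeg b) + qshift ws S = k" using assms(2) b unfolding qhomog_def by blast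
  ultimately show "2 * int (mdeg m) + qshift ws S' = k + d" unfolding m mdeg_add by simp
qed

lemma opcomp_commutator_congruent:
  assumes "S' \<in> terms" and "S \<in> terms"
  defines "u \<equiv> \<lambda>S' S p. u_mat S' S * p"
  shows "opcomp r (rdiff ws) u S' S p - opcomp r u (rdiff ws) S' S p
           - (\<Sum>a\<in>{1..n}. (Var 0 a + Var r (braid_perm ws a)) * dot_slide ws a S' S p)
         \<in> term_ideal n ws S'"
proof -
  have rdiff: "rdiff ws = (\<lambda>S' S p. d_mat S' S * p)" by (intro ext) (rule rdiff_eq)
  have "opcomp r (rdiff ws) u S' S p - opcomp r u (rdiff ws) S' S p
           - (\<Sum>a\<in>{1..n}. (Var 0 a + Var r (braid_perm ws a)) * dot_slide ws a S' S p)
      = (mat_mult d_mat u_mat S' S - mat_mult u_mat d_mat S' S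
           - (\<Sum>a\<in>{1..n}. (Var 0 a + Var r (braid_perm ws a)) * xi_mat a S' S)) * p"
    unfolding rdiff u_def opcomp_eq dot_slide_eq by (simp add: algebra_simps sum_distrib_left)
  then show ?thesis
    using commutator_congruent[OF assms(1,2)] by (simp add: term_ideal_mult mult.commute[of _ p])
qed

end

theorem lemma3p20:
  fixes n :: nat and ws :: "(nat \<times> bool) list"
  assumes "\<forall>x\<in>set ws. 1 \<le> fst x \<and> fst x < n"
  shows "\<exists>u :: op.
    \<forall>S'\<in>Pow {1..length ws}. \<forall>S\<in>Pow {1..length ws}.
      bimod_hom n ws S' S (u S' S)
    \<and> (hdeg ws S' \<noteq> hdeg ws S - 2 \<longrightarrow>
         (\<forall>p. in_ring (length ws) n p \<longrightarrow> u S' S p \<in> term_ideal n ws S'))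
    \<and> (\<forall>p k. in_ring (length ws) n p \<longrightarrow> qhomog ws S k p \<longrightarrow>
         (\<exists>h. in_ring (length ws) n h \<and> qhomog ws S' (k + 4) h
              \<and> u S' S p - h \<in> term_ideal n ws S'))
    \<and> (\<forall>p. in_ring (length ws) n p \<longrightarrow>
         opcomp (length ws) (rdiff ws) u S' S p - opcomp (length ws) u (rdiff ws) S' S p
         - (\<Sum>a\<in>{1..n}. (Var 0 a + Var (length ws) (braid_perm ws a)) * dot_slide ws a S' S p)
         \<in> term_ideal n ws S')"
proof -
  interpret braid_word n ws by standard (rule assms)
  let ?u = "\<lambda>S' S p. u_mat S' S * p"
  show ?thesis
  proof (intro exI[of _ ?u] ballI conjI allI impI)
    fix S' S
    show "bimod_hom n ws S' S (?u S' S)"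
      by (rule bimod_hom_mult_entry[OF u_mat_entries_in_ring u_mat_respects_term_ideals])
  next
    fix S' S p assume "hdeg ws S' \<noteq> hdeg ws S - 2"
    then have "u_mat S' S = 0" using u_mat_shifts_hdeg unfolding shifts_hdeg_def by force
    then show "?u S' S p \<in> term_ideal n ws S'" by (simp add: term_ideal_0)
  next
    fix S' S p k assume "in_ring r n p" and "qhomog ws S k p"
    then show "\<exists>h. in_ring r n h \<and> qhomog ws S' (k + 4) h \<and> ?u S' S p - h \<in> term_ideal n ws S'"
      using u_mat_entries_in_ring qhomog_mult_entry[OF u_mat_shifts_qdeg]
      unfolding entries_in_ring_def by (intro exI[of _ "?u S' S p"]) (simp add: in_ring_mult term_ideal_0)
  next
    fix S' S p assume "S' \<in> Pow {1..r}" and "S \<in> Pow {1..r}"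
    then show "opcomp r (rdiff ws) ?u S' S p - opcomp r ?u (rdiff ws) S' S p
        - (\<Sum>a\<in>{1..n}. (Var 0 a + Var r (braid_perm ws a)) * dot_slide ws a S' S p) \<in> term_ideal n ws S'"
      by (rule opcomp_commutator_congruent)
  qed
qed

end
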